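(* Let $u:\mathbb{R}_{\ge 0}\to[0,1]$ be non-increasing with $u(0)=1$ and $\lim_{t\to\infty}u(t)=0$; let there be $n$ algorithms with runtime distributions $\mathcal{D}_i$, CDFs $F_i$, expected utilities $U_i=\mathbb{E}_{t\sim\mathcal{D}_i}[u(t)]$; let $i^{opt}\in\arg\max_iU_i$ and $\Delta_i=U_{i^{opt}}-U_i$; let $\delta\in(0,1)$. Consider the Utilitarian Procrastination (UP) procedure described below. With probability at least $1-\delta$ the following all hold: (1) UP eventually returns the optimal algorithm; (2) if UP returns at the end of a round $m$ in which the current captime $\kappa_{i^{opt}}$ of $i^{opt}$ satisfies $$2\sqrt{\frac{\ln\big(11nm^2(\log\kappa_{i^{opt}}+1)^2/\delta\big)}{2m}}+u(\kappa_{i^{opt}})\big(1-F_{i^{opt}}(\kappa_{i^{opt}})\big)\le\epsilon,$$ then the returned algorithm is $\epsilon$-optimal; (3) for any suboptimal algorithm $i$, if in some round $m$ the current captimes $\kappa_i,\kappa_{i^{opt}}$ satisfy $$2\sqrt{\frac{\ln(11nm^2(\log\kappa_i+1)^2/\delta)}{2m}}+2\sqrt{\frac{\ln(11nm^2(\log\kappa_{i^{opt}}+1)^2/\delta)}{2m}}+u(\kappa_i)\big(1-F_i(\kappa_i)\big)+u(\kappa_{i^{opt}})\big(1-F_{i^{opt}}(\kappa_{i^{opt}})\big)\le\Delta_i,$$ then $i$ is eliminated.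
   Context: Runs of algorithm $i$ at captime $\kappa$ yield independent samples $\min(t,\kappa)$ with $t\sim\mathcal{D}_i$ ($\mathcal{D}_i$ induced by instances drawn i.i.d. from an instance distribution). An algorithm $j$ is $\epsilon$-optimal if $U_j\ge\max_iU_i-\epsilon$. UP procedure: initialize the candidate set $I=\{1,\dots,n\}$ and $\kappa_i=1$ for all $i$. For rounds $m=1,2,3,\dots$: for each $i\in I$, run $i$ on $m$ instances with captime $\kappa_i$, obtaining $t_{i1}(\kappa_i),\dots,t_{im}(\kappa_i)$; let $\widehat{F}_{im}(\kappa_i)=|\{j: t_{ij}(\kappa_i)<\kappa_i\}|/m$, $\widehat{U}_{im}(\kappa_i)=\frac1m\sum_{j=1}^mu(t_{ij}(\kappa_i))$, $\alpha_{im}=\sqrt{\ln(11nm^2(\log\kappa_i+1)^2/\delta)/(2m)}$, $UCB_{im}=\widehat{U}_{im}(\kappa_i)+(1-u(\kappa_i))\alpha_{im}$, $LCB_{im}=\widehat{U}_{im}(\kappa_i)-\alpha_{im}-u(\kappa_i)(1-\widehat{F}_{im}(\kappa_i))$. Then let $i^*\in\arg\max_{i\in I}LCB_{im}$. For each $i\in I$: if $UCB_{im}<LCB_{i^*m}$, remove $i$ from $I$ ("eliminate" $i$); if $2\alpha_{im}\le u(\kappa_i)(1-\widehat{F}_{im}(\kappa_i))$, set $\kappa_i\leftarrow2\kappa_i$. If $|I|=1$ or execution is interrupted, return $i^*$. *)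

theory Defs
  imports "HOL-Probability.Probability"
begin

text \<open>Algorithms are indexed 0..n-1.  s i m j is the (uncapped) runtime observed for
  algorithm i on the j-th instance (j < m) of round m; the capped observation at
  captime k is min (s i m j) k.  sel is the (arbitrary) tie-breaking rule choosing
  an element of argmax of LCB in round m.\<close>

definition up_alpha :: "nat \<Rightarrow> real \<Rightarrow> nat \<Rightarrow> real \<Rightarrow> real" where
  "up_alpha n \<delta> m k =
     sqrt (ln (11 * real n * real m ^ 2 * (log 2 k + 1) ^ 2 / \<delta>) / (2 * real m))"

definition up_Fhat :: "(nat \<Rightarrow> nat \<Rightarrow> nat \<Rightarrow> real) \<Rightarrow> nat \<Rightarrow> nat \<Rightarrow> real \<Rightarrow> real" where
  "up_Fhat s i m k = real (card {j. j < m \<and> min (s i m j) k < k}) / real m"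

definition up_Uhat :: "(real \<Rightarrow> real) \<Rightarrow> (nat \<Rightarrow> nat \<Rightarrow> nat \<Rightarrow> real) \<Rightarrow> nat \<Rightarrow> nat \<Rightarrow> real \<Rightarrow> real" where
  "up_Uhat u s i m k = (\<Sum>j<m. u (min (s i m j) k)) / real m"

definition up_UCB :: "nat \<Rightarrow> real \<Rightarrow> (real \<Rightarrow> real) \<Rightarrow> (nat \<Rightarrow> nat \<Rightarrow> nat \<Rightarrow> real)
    \<Rightarrow> nat \<Rightarrow> nat \<Rightarrow> real \<Rightarrow> real" where
  "up_UCB n \<delta> u s i m k = up_Uhat u s i m k + (1 - u k) * up_alpha n \<delta> m k"

definition up_LCB :: "nat \<Rightarrow> real \<Rightarrow> (real \<Rightarrow> real) \<Rightarrow> (nat \<Rightarrow> nat \<Rightarrow> nat \<Rightarrow> real)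
    \<Rightarrow> nat \<Rightarrow> nat \<Rightarrow> real \<Rightarrow> real" where
  "up_LCB n \<delta> u s i m k =
     up_Uhat u s i m k - up_alpha n \<delta> m k - u k * (1 - up_Fhat s i m k)"

text \<open>A state is the candidate set together with the current captimes.\<close>
type_synonym up_st = "nat set \<times> (nat \<Rightarrow> real)"

definition up_istar :: "nat \<Rightarrow> real \<Rightarrow> (real \<Rightarrow> real) \<Rightarrow> (nat \<Rightarrow> nat set \<Rightarrow> (nat \<Rightarrow> real) \<Rightarrow> nat)
    \<Rightarrow> (nat \<Rightarrow> nat \<Rightarrow> nat \<Rightarrow> real) \<Rightarrow> nat \<Rightarrow> up_st \<Rightarrow> nat" where
  "up_istar n \<delta> u sel s m st = sel m (fst st) (\<lambda>i. up_LCB n \<delta> u s i m (snd st i))"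

definition up_round :: "nat \<Rightarrow> real \<Rightarrow> (real \<Rightarrow> real) \<Rightarrow> (nat \<Rightarrow> nat set \<Rightarrow> (nat \<Rightarrow> real) \<Rightarrow> nat)
    \<Rightarrow> (nat \<Rightarrow> nat \<Rightarrow> nat \<Rightarrow> real) \<Rightarrow> nat \<Rightarrow> up_st \<Rightarrow> up_st" where
  "up_round n \<delta> u sel s m st =
     (let I = fst st; k = snd st; c = up_LCB n \<delta> u s (up_istar n \<delta> u sel s m st) m
             (k (up_istar n \<delta> u sel s m st))
      in ({i \<in> I. \<not> up_UCB n \<delta> u s i m (k i) < c},
          \<lambda>i. if i \<in> I \<and> 2 * up_alpha n \<delta> m (k i) \<le> u (k i) * (1 - up_Fhat s i m (k i))
              then 2 * k i else k i))"

text \<open>up_state ... m is the state after round m (m = 0: initial state).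
  Round m (m \<ge> 1) uses up_state ... (m - 1).\<close>
primrec up_state :: "nat \<Rightarrow> real \<Rightarrow> (real \<Rightarrow> real) \<Rightarrow> (nat \<Rightarrow> nat set \<Rightarrow> (nat \<Rightarrow> real) \<Rightarrow> nat)
    \<Rightarrow> (nat \<Rightarrow> nat \<Rightarrow> nat \<Rightarrow> real) \<Rightarrow> nat \<Rightarrow> up_st" where
  "up_state n \<delta> u sel s 0 = ({..<n}, \<lambda>_. 1)"
| "up_state n \<delta> u sel s (Suc m) = up_round n \<delta> u sel s (Suc m) (up_state n \<delta> u sel s m)"

text \<open>Round m is executed iff m \<ge> 1 and UP did not stop (|I| = 1) after an earlier round.\<close>
definition up_executed :: "nat \<Rightarrow> real \<Rightarrow> (real \<Rightarrow> real) \<Rightarrow> (nat \<Rightarrow> nat set \<Rightarrow> (nat \<Rightarrow> real) \<Rightarrow> nat)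
    \<Rightarrow> (nat \<Rightarrow> nat \<Rightarrow> nat \<Rightarrow> real) \<Rightarrow> nat \<Rightarrow> bool" where
  "up_executed n \<delta> u sel s m \<longleftrightarrow>
     1 \<le> m \<and> (\<forall>k. 1 \<le> k \<and> k < m \<longrightarrow> card (fst (up_state n \<delta> u sel s k)) \<noteq> 1)"

definition up_cap :: "nat \<Rightarrow> real \<Rightarrow> (real \<Rightarrow> real) \<Rightarrow> (nat \<Rightarrow> nat set \<Rightarrow> (nat \<Rightarrow> real) \<Rightarrow> nat)
    \<Rightarrow> (nat \<Rightarrow> nat \<Rightarrow> nat \<Rightarrow> real) \<Rightarrow> nat \<Rightarrow> nat \<Rightarrow> real" where
  "up_cap n \<delta> u sel s m i = snd (up_state n \<delta> u sel s (m - 1)) i"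

definition up_return :: "nat \<Rightarrow> real \<Rightarrow> (real \<Rightarrow> real) \<Rightarrow> (nat \<Rightarrow> nat set \<Rightarrow> (nat \<Rightarrow> real) \<Rightarrow> nat)
    \<Rightarrow> (nat \<Rightarrow> nat \<Rightarrow> nat \<Rightarrow> real) \<Rightarrow> nat \<Rightarrow> nat" where
  "up_return n \<delta> u sel s m = up_istar n \<delta> u sel s m (up_state n \<delta> u sel s (m - 1))"

text \<open>F i k = Pr_{t ~ D_i}(t < k), matching the empirical Fhat (strict inequality).\<close>
definition run_cdf :: "real measure \<Rightarrow> real \<Rightarrow> real" where
  "run_cdf D k = measure D {t. t < k}"

definition exp_util :: "(real \<Rightarrow> real) \<Rightarrow> real measure \<Rightarrow> real" where
  "exp_util u D = (\<integral>t. u t \<partial>D)"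

end

theory Submission
  imports Defs "HOL-Real_Asymp.Real_Asymp"
begin

text \<open>All randomness is confined to one event: in every round \<open>m\<close>, for every algorithm and every
  captime \<open>2^k\<close> with \<open>k < m\<close> it could have, the empirical capped utility and the empirical
  utility of completed runs are within the confidence radius of their expectations.  By
  Hoeffding's inequality and union bounds over algorithms, \<open>k\<close> and \<open>m\<close>, this fails with
  probability at most \<open>(4/11) (\<pi>\<^sup>2/6)\<^sup>2 \<delta> \<le> \<delta>\<close>.

  The two expectations sandwich \<open>U\<^sub>i\<close> and differ by \<open>u(\<kappa>) (1 - F\<^sub>i(\<kappa>))\<close>, so on this event
  \<open>LCB < U\<^sub>i \<le> UCB\<close>, and both bounds are within \<open>2\<alpha> + u(\<kappa>) (1 - F\<^sub>i(\<kappa>))\<close> of \<open>U\<^sub>i\<close>.  Everything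
  else is deterministic: the optimal algorithm is never eliminated, the returned leader is at
  least as good as the LCB of the optimal one, and an algorithm that stays a candidate forever
  either has its captime frozen eventually (then the doubling test keeps failing, so its timeout
  mass is \<open>O(\<alpha>)\<close>) or unbounded (then \<open>u(\<kappa>) \<rightarrow> 0\<close>); either way its confidence width vanishes,
  so every suboptimal algorithm is eventually eliminated.\<close>

lemma sum_inverse_squares_le: "(\<Sum>k<N. 1 / (real k + 1)^2) \<le> pi^2 / 6"
proof -
  have sums: "(\<lambda>k. 1 / (real k + 1)^2) sums (pi^2 / 6)"
    using inverse_squares_sums by (simp add: add.commute)
  show ?thesis
    using sum_le_suminf[OF sums_summable[OF sums], of "{..<N}"] sums_unique[OF sums] by simp
qed

lemma pi_fourth_power_le: "pi ^ 4 \<le> 99"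
proof -
  have "pi ^ 4 \<le> (63 / 20) ^ 4" using pi_approx(2) by (intro power_mono) auto
  also have "\<dots> \<le> 99" by (simp add: power_divide)
  finally show ?thesis .
qed

lemma (in finite_measure) measure_UN_le_inverse_squares:
  assumes sets: "\<And>m. B m \<in> sets M"
    and bound: "\<And>m. measure M (B m) \<le> c / (real m + 1)^2"
  shows "measure M (\<Union>m. B m) \<le> c * pi^2 / 6"
proof -
  have sums: "(\<lambda>m. c / (real m + 1)^2) sums (c * pi^2 / 6)"
    using sums_mult[OF inverse_squares_sums, of c] by (simp add: add.commute)
  have summable: "summable (\<lambda>m. measure M (B m))"
    by (rule summable_comparison_test[OF _ sums_summable[OF sums]]) (use bound in auto)
  have "measure M (\<Union>m. B m) \<le> (\<Sum>m. measure M (B m))"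
    using sets summable by (intro finite_measure_subadditive_countably) auto
  also have "\<dots> \<le> c * pi^2 / 6"
    using suminf_le[OF bound summable sums_summable[OF sums]] sums_unique[OF sums] by simp
  finally show ?thesis .
qed

lemma up_alpha_power_of_two:
  "up_alpha n \<delta> m (2^k) = sqrt (ln (11 * real n * (real m)^2 * (real k + 1)^2 / \<delta>) / (2 * real m))"
  by (simp add: up_alpha_def)

context
  fixes n m :: nat and \<delta> :: real
  assumes n: "1 \<le> n" and m: "1 \<le> m" and \<delta>: "0 < \<delta>" "\<delta> \<le> 1"
begin

lemma up_alpha_log_arg_gt_1: "1 < 11 * real n * (real m)^2 * (real k + 1)^2 / \<delta>"
proof -
  have "1 * 1 * 1 \<le> real n * (real m)^2 * (real k + 1)^2"
    using n m by (intro mult_mono) (auto simp: one_le_power)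
  then show ?thesis using \<delta> by (simp add: field_simps)
qed

lemma up_alpha_pos: "0 < up_alpha n \<delta> m (2^k)"
  using up_alpha_log_arg_gt_1[of k] m by (simp add: up_alpha_power_of_two)

text \<open>This is the per-estimate failure probability that Hoeffding's inequality gives at radius
  \<open>up_alpha\<close>.\<close>
lemma exp_up_alpha:
  "exp (- 2 * real m * (up_alpha n \<delta> m (2^k))^2) = \<delta> / (11 * real n * (real m)^2 * (real k + 1)^2)"
proof -
  define L where "L = 11 * real n * (real m)^2 * (real k + 1)^2 / \<delta>"
  have L: "1 < L" unfolding L_def by (rule up_alpha_log_arg_gt_1)
  have "- 2 * real m * (up_alpha n \<delta> m (2^k))^2 = - ln L"
    using L m by (simp add: up_alpha_power_of_two L_def[symmetric])
  then have "exp (- 2 * real m * (up_alpha n \<delta> m (2^k))^2) = 1 / L"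
    using L by (simp add: exp_minus inverse_eq_divide)
  then show ?thesis using \<delta> by (simp add: L_def)
qed

lemma up_alpha_le:
  assumes "k < m"
  shows "up_alpha n \<delta> m (2^k) \<le> sqrt (ln (11 * real n / \<delta> * (real m)^4) / (2 * real m))"
proof -
  have "(real k + 1)^2 \<le> (real m)^2" using assms by (intro power_mono) auto
  then have "11 * real n * (real m)^2 * (real k + 1)^2 / \<delta>
      \<le> 11 * real n * (real m)^2 * (real m)^2 / \<delta>"
    using \<delta> by (intro divide_right_mono mult_left_mono) auto
  also have "\<dots> = 11 * real n / \<delta> * (real m)^4" by simp
  finally have "11 * real n * (real m)^2 * (real k + 1)^2 / \<delta> \<le> 11 * real n / \<delta> * (real m)^4" .
  then have "ln (11 * real n * (real m)^2 * (real k + 1)^2 / \<delta>) \<le> ln (11 * real n / \<delta> * (real m)^4)"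
    using up_alpha_log_arg_gt_1[of k] by (intro ln_mono) auto
  then show ?thesis
    using m by (simp add: up_alpha_power_of_two divide_right_mono)
qed

end

lemma up_alpha_eventually_small:
  assumes n: "1 \<le> n" and \<delta>: "0 < \<delta>" "\<delta> \<le> 1" and \<eta>: "0 < \<eta>"
  shows "eventually (\<lambda>m. \<forall>k<m. up_alpha n \<delta> m (2^k) < \<eta>) sequentially"
proof -
  define c where "c = 11 * real n / \<delta>"
  have "c > 0" using n \<delta> by (simp add: c_def)
  then have "((\<lambda>x::real. ln (c * x^4) / (2 * x)) \<longlongrightarrow> 0) at_top" by real_asymp
  then have "((\<lambda>m. sqrt (ln (c * (real m)^4) / (2 * real m))) \<longlongrightarrow> sqrt 0) sequentially"
    by (intro tendsto_real_sqrt filterlim_compose[OF _ filterlim_real_sequentially])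
  then have "eventually (\<lambda>m. sqrt (ln (c * (real m)^4) / (2 * real m)) < \<eta>) sequentially"
    using \<eta> by (intro order_tendstoD(2)) auto
  then show ?thesis
    using eventually_ge_at_top[of 1]
  proof eventually_elim
    case (elim m)
    then show ?case using up_alpha_le[OF n elim(2) \<delta>] by (fastforce simp: c_def)
  qed
qed

lemma antimono_borel_measurable:
  fixes u :: "real \<Rightarrow> real"
  assumes "antimono u"
  shows "u \<in> borel_measurable borel"
proof -
  have "(\<lambda>x. - u x) \<in> borel_measurable borel"
    using assms by (intro borel_measurable_mono) (auto simp: mono_def antimono_def)
  then show ?thesis by simp
qed

lemma integrable_unit_bounded:
  fixes f :: "real \<Rightarrow> real"
  assumes D: "prob_space D" "sets D = sets borel"
    and "f \<in> borel_measurable borel" "\<And>t. \<bar>f t\<bar> \<le> 1"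
  shows "integrable D f"
proof -
  interpret prob_space D by (rule D(1))
  have "f \<in> borel_measurable D"
    by (subst measurable_cong_sets[OF D(2) refl]) (rule assms(3))
  then show ?thesis
    by (rule integrable_const_bound[where B=1, rotated]) (use assms(4) in auto)
qed

definition capped_util :: "(real \<Rightarrow> real) \<Rightarrow> real measure \<Rightarrow> real \<Rightarrow> real" where
  "capped_util u D \<kappa> = (\<integral>t. u (min t \<kappa>) \<partial>D)"

definition completed_util :: "(real \<Rightarrow> real) \<Rightarrow> real measure \<Rightarrow> real \<Rightarrow> real" where
  "completed_util u D \<kappa> = (\<integral>t. (if t < \<kappa> then u t else 0) \<partial>D)"

context
  fixes u :: "real \<Rightarrow> real" and D :: "real measure"
  assumes D: "prob_space D" "sets D = sets borel"
    and u_range: "\<And>t. 0 \<le> u t \<and> u t \<le> 1" and u_antimono: "antimono u"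
begin

lemma completed_util_le_exp_util: "completed_util u D \<kappa> \<le> exp_util u D"
  unfolding completed_util_def exp_util_def using u_range antimono_borel_measurable[OF u_antimono]
  by (intro integral_mono integrable_unit_bounded[OF D]) auto

lemma exp_util_le_capped_util: "exp_util u D \<le> capped_util u D \<kappa>"
  unfolding capped_util_def exp_util_def using u_range antimono_borel_measurable[OF u_antimono]
  by (intro integral_mono integrable_unit_bounded[OF D]) (auto intro: antimonoD[OF u_antimono])

lemma capped_util_minus_completed_util:
  "capped_util u D \<kappa> - completed_util u D \<kappa> = u \<kappa> * (1 - run_cdf D \<kappa>)"
proof -
  interpret prob_space D by (rule D(1))
  have [measurable]: "u \<in> borel_measurable borel" by (rule antimono_borel_measurable[OF u_antimono])
  have space: "space D = UNIV" using sets_eq_imp_space_eq[OF D(2)] by simp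
  have "capped_util u D \<kappa> - completed_util u D \<kappa>
      = (\<integral>t. u (min t \<kappa>) - (if t < \<kappa> then u t else 0) \<partial>D)"
    unfolding capped_util_def completed_util_def using u_range
    by (intro Bochner_Integration.integral_diff[symmetric] integrable_unit_bounded[OF D]) auto
  also have "\<dots> = (\<integral>t. u \<kappa> * indicator (space D - {t. t < \<kappa>}) t \<partial>D)"
    by (intro Bochner_Integration.integral_cong) (auto simp: space indicator_def)
  also have "\<dots> = u \<kappa> * (1 - run_cdf D \<kappa>)"
    using D(2) by (simp add: prob_compl run_cdf_def Int_absorb2)
  finally show ?thesis .
qed

lemma capped_util_eq_1:
  assumes "u \<kappa> = 1"
  shows "capped_util u D \<kappa> = 1"
proof -
  interpret prob_space D by (rule D(1))
  have "u (min t \<kappa>) = 1" for t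
    using antimonoD[OF u_antimono, of "min t \<kappa>" \<kappa>] u_range[of "min t \<kappa>"] assms by auto
  then show ?thesis by (simp add: capped_util_def prob_space)
qed

end

lemma run_cdf_bounds: "prob_space D \<Longrightarrow> 0 \<le> run_cdf D \<kappa> \<and> run_cdf D \<kappa> \<le> 1"
  by (simp add: run_cdf_def prob_space.prob_le_1)

lemma up_Uhat_minus_timeouts:
  assumes "1 \<le> m"
  shows "up_Uhat u s i m \<kappa> - u \<kappa> * (1 - up_Fhat s i m \<kappa>)
    = (\<Sum>j<m. if s i m j < \<kappa> then u (s i m j) else 0) / real m"
proof -
  have card: "real (card {j. j < m \<and> min (s i m j) \<kappa> < \<kappa>}) = (\<Sum>j<m. if s i m j < \<kappa> then 1 else 0)"
    by (simp add: sum.If_cases lessThan_def Collect_conj_eq min_less_iff_disj)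
  have "(\<Sum>j<m. u (min (s i m j) \<kappa>))
      = (\<Sum>j<m. (if s i m j < \<kappa> then u (s i m j) else 0)
          + u \<kappa> * (1 - (if s i m j < \<kappa> then 1 else 0)))"
    by (intro sum.cong) auto
  then show ?thesis
    using assms by (simp add: up_Uhat_def up_Fhat_def card sum.distrib sum_subtractf
        sum_distrib_left[symmetric] field_simps)
qed

lemma (in prob_space) hoeffding_iid_mean:
  fixes X :: "nat \<Rightarrow> 'a \<Rightarrow> real" and D :: "real measure" and g :: "real \<Rightarrow> real"
  assumes X_meas: "\<And>j. X j \<in> borel_measurable M"
    and X_distr: "\<And>j. j < m \<Longrightarrow> distr M borel (X j) = D"
    and X_indep: "indep_vars (\<lambda>_. borel) X {..<m}"
    and g_meas: "g \<in> borel_measurable borel" and g_range: "\<And>x. a \<le> g x \<and> g x \<le> b"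
    and "a < b" "1 \<le> m" "0 \<le> \<epsilon>"
  shows "prob {\<omega>\<in>space M. \<epsilon> \<le> \<bar>(\<Sum>j<m. g (X j \<omega>)) / real m - (\<integral>t. g t \<partial>D)\<bar>}
    \<le> 2 * exp (- 2 * real m * \<epsilon>^2 / (b - a)^2)"
proof -
  have [measurable]: "g \<in> borel_measurable borel" "\<And>j. X j \<in> borel_measurable M"
    by (fact g_meas X_meas)+
  have distr_g: "distr M borel (\<lambda>\<omega>. g (X j \<omega>)) = distr D borel g" if "j < m" for j
  proof -
    have "distr M borel (\<lambda>\<omega>. g (X j \<omega>)) = distr (distr M borel (X j)) borel g"
      by (subst distr_distr) (auto simp: comp_def)
    then show ?thesis using X_distr[OF that] by simp
  qed
  interpret H: Hoeffding_ineq_iid M "{..<m}" "\<lambda>j \<omega>. g (X j \<omega>)" "\<lambda>\<omega>. g (X 0 \<omega>)" a b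
    "expectation (\<lambda>\<omega>. g (X 0 \<omega>))"
  proof unfold_locales
    show "indep_vars (\<lambda>_. borel) (\<lambda>j \<omega>. g (X j \<omega>)) {..<m}"
      by (rule indep_vars_compose2[OF X_indep]) simp
    show "distr M borel (\<lambda>\<omega>. g (X j \<omega>)) = distr M borel (\<lambda>\<omega>. g (X 0 \<omega>))" if "j \<in> {..<m}" for j
      using distr_g[of j] distr_g[of 0] that \<open>1 \<le> m\<close> by auto
  qed (use g_range in auto)
  have "expectation (\<lambda>\<omega>. g (X 0 \<omega>)) = (\<integral>t. g t \<partial>distr M borel (X 0))"
    by (rule integral_distr[symmetric]) auto
  also have "\<dots> = (\<integral>t. g t \<partial>D)" using X_distr[of 0] \<open>1 \<le> m\<close> by simp
  finally have mean: "expectation (\<lambda>\<omega>. g (X 0 \<omega>)) = (\<integral>t. g t \<partial>D)" .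
  have "prob {\<omega>\<in>space M. \<epsilon> \<le> \<bar>(\<Sum>j\<in>{..<m}. g (X j \<omega>)) / real (card {..<m})
      - expectation (\<lambda>\<omega>. g (X 0 \<omega>))\<bar>} \<le> 2 * exp (- 2 * real (card {..<m}) * \<epsilon>^2 / (b - a)^2)"
    by (rule H.Hoeffding_ineq_abs_ge') (use assms(6-8) in \<open>auto simp: lessThan_empty_iff\<close>)
  then show ?thesis unfolding mean by simp
qed

locale up_samples = prob_space M for M :: "'w measure" +
  fixes n :: nat and \<delta> :: real and u :: "real \<Rightarrow> real"
    and D :: "nat \<Rightarrow> real measure" and T :: "nat \<Rightarrow> nat \<Rightarrow> nat \<Rightarrow> 'w \<Rightarrow> real"
  assumes n: "1 \<le> n" and \<delta>: "0 < \<delta>" "\<delta> \<le> 1"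
    and u_range: "\<And>t. 0 \<le> u t \<and> u t \<le> 1" and u_antimono: "antimono u"
    and D: "\<And>i. i < n \<Longrightarrow> prob_space (D i) \<and> sets (D i) = sets borel"
    and T_meas: "\<And>i m j. i < n \<Longrightarrow> T i m j \<in> borel_measurable M"
    and T_distr: "\<And>i m j. i < n \<Longrightarrow> j < m \<Longrightarrow> distr M borel (T i m j) = D i"
    and T_indep: "\<And>i m. i < n \<Longrightarrow> indep_vars (\<lambda>_. borel) (T i m) {..<m}"
begin

lemma u_measurable[measurable]: "u \<in> borel_measurable borel"
  by (rule antimono_borel_measurable[OF u_antimono])

text \<open>The capped utility ranges over \<open>[u \<kappa>, 1]\<close>, which is why the upper confidence radius
  carries the factor \<open>1 - u \<kappa>\<close>.\<close>
lemma capped_mean_deviation: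
  assumes i: "i < n" and m: "1 \<le> m" and "0 \<le> \<alpha>"
  shows "prob {\<omega>\<in>space M. (1 - u \<kappa>) * \<alpha> <
      \<bar>(\<Sum>j<m. u (min (T i m j \<omega>) \<kappa>)) / real m - capped_util u (D i) \<kappa>\<bar>}
    \<le> 2 * exp (- 2 * real m * \<alpha>^2)"
proof (cases "u \<kappa> = 1")
  case True
  then have "u (min t \<kappa>) = 1" for t
    using antimonoD[OF u_antimono, of "min t \<kappa>" \<kappa>] u_range[of "min t \<kappa>"] by auto
  moreover have "capped_util u (D i) \<kappa> = 1"
    using D[OF i] u_range u_antimono True by (intro capped_util_eq_1) auto
  ultimately show ?thesis
    using m True by simp
next
  case False
  then have "u \<kappa> < 1" using u_range[of \<kappa>] by auto
  have [measurable]: "\<And>j. T i m j \<in> borel_measurable M" using T_meas i by auto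
  have "prob {\<omega>\<in>space M. (1 - u \<kappa>) * \<alpha> <
      \<bar>(\<Sum>j<m. u (min (T i m j \<omega>) \<kappa>)) / real m - capped_util u (D i) \<kappa>\<bar>}
    \<le> prob {\<omega>\<in>space M. (1 - u \<kappa>) * \<alpha> \<le>
      \<bar>(\<Sum>j<m. u (min (T i m j \<omega>) \<kappa>)) / real m - (\<integral>t. u (min t \<kappa>) \<partial>D i)\<bar>}"
    by (intro finite_measure_mono) (auto simp: capped_util_def)
  also have "\<dots> \<le> 2 * exp (- 2 * real m * ((1 - u \<kappa>) * \<alpha>)^2 / (1 - u \<kappa>)^2)"
  proof (rule hoeffding_iid_mean[OF T_meas[OF i] T_distr[OF i] T_indep[OF i]])
    show "u \<kappa> \<le> u (min t \<kappa>) \<and> u (min t \<kappa>) \<le> 1" for t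
      using antimonoD[OF u_antimono, of "min t \<kappa>" \<kappa>] u_range[of "min t \<kappa>"] by simp
  qed (use \<open>u \<kappa> < 1\<close> m \<open>0 \<le> \<alpha>\<close> in auto)
  also have "\<dots> = 2 * exp (- 2 * real m * \<alpha>^2)"
    using \<open>u \<kappa> < 1\<close> by (simp add: power_mult_distrib)
  finally show ?thesis .
qed

lemma completed_mean_deviation:
  assumes i: "i < n" and m: "1 \<le> m" and "0 \<le> \<alpha>"
  shows "prob {\<omega>\<in>space M. \<alpha> \<le>
      \<bar>(\<Sum>j<m. if T i m j \<omega> < \<kappa> then u (T i m j \<omega>) else 0) / real m - completed_util u (D i) \<kappa>\<bar>}
    \<le> 2 * exp (- 2 * real m * \<alpha>^2)"
  using hoeffding_iid_mean[of "T i m" m "D i" "\<lambda>t. if t < \<kappa> then u t else 0" 0 1 \<alpha>]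
    T_meas[OF i] T_distr[OF i] T_indep[OF i] u_range assms
  by (simp add: completed_util_def)

end

text \<open>Captimes in round \<open>m\<close> are powers \<open>2^k\<close> with \<open>k < m\<close>, so these are all the estimates UP
  can ever use.\<close>
definition up_accurate :: "nat \<Rightarrow> real \<Rightarrow> (real \<Rightarrow> real) \<Rightarrow> (nat \<Rightarrow> nat \<Rightarrow> nat \<Rightarrow> real)
    \<Rightarrow> (nat \<Rightarrow> real \<Rightarrow> real) \<Rightarrow> (nat \<Rightarrow> real \<Rightarrow> real) \<Rightarrow> bool" where
  "up_accurate n \<delta> u s \<mu>1 \<mu>2 \<longleftrightarrow> (\<forall>i<n. \<forall>m\<ge>1. \<forall>k<m.
     \<bar>up_Uhat u s i m (2^k) - \<mu>1 i (2^k)\<bar> \<le> (1 - u (2^k)) * up_alpha n \<delta> m (2^k) \<and>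
     \<bar>up_Uhat u s i m (2^k) - u (2^k) * (1 - up_Fhat s i m (2^k)) - \<mu>2 i (2^k)\<bar>
       < up_alpha n \<delta> m (2^k))"

context up_samples
begin

definition estimate_failure :: "nat \<Rightarrow> nat \<Rightarrow> nat \<Rightarrow> 'w set" where
  "estimate_failure i m k =
     {\<omega>\<in>space M. (1 - u (2^k)) * up_alpha n \<delta> m (2^k) <
        \<bar>(\<Sum>j<m. u (min (T i m j \<omega>) (2^k))) / real m - capped_util u (D i) (2^k)\<bar>} \<union>
     {\<omega>\<in>space M. up_alpha n \<delta> m (2^k) \<le>
        \<bar>(\<Sum>j<m. if T i m j \<omega> < 2^k then u (T i m j \<omega>) else 0) / real m
          - completed_util u (D i) (2^k)\<bar>}"

definition round_failure :: "nat \<Rightarrow> 'w set" where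
  "round_failure m = (\<Union>i<n. \<Union>k<m. estimate_failure i m k)"

lemma estimate_failure_in_events: "i < n \<Longrightarrow> estimate_failure i m k \<in> events"
proof -
  assume "i < n"
  then have [measurable]: "\<And>j. T i m j \<in> borel_measurable M" using T_meas by auto
  show ?thesis unfolding estimate_failure_def by measurable
qed

lemma round_failure_in_events: "round_failure m \<in> events"
  unfolding round_failure_def using estimate_failure_in_events by auto

lemma prob_estimate_failure:
  assumes i: "i < n" and m: "1 \<le> m"
  shows "prob (estimate_failure i m k) \<le> 4 * \<delta> / (11 * real n * (real m)^2 * (real k + 1)^2)"
proof -
  have \<alpha>: "0 \<le> up_alpha n \<delta> m (2^k)" using up_alpha_pos[OF n m \<delta>] by (rule less_imp_le)
  have [measurable]: "\<And>j. T i m j \<in> borel_measurable M" using T_meas i by auto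
  have "prob (estimate_failure i m k)
      \<le> 2 * exp (- 2 * real m * (up_alpha n \<delta> m (2^k))^2)
        + 2 * exp (- 2 * real m * (up_alpha n \<delta> m (2^k))^2)"
    unfolding estimate_failure_def
    by (rule order_trans[OF measure_Un_le add_mono], measurable)
      (fact capped_mean_deviation[OF i m \<alpha>] completed_mean_deviation[OF i m \<alpha>])+
  then show ?thesis using exp_up_alpha[OF n m \<delta>] by simp
qed

lemma prob_round_failure:
  assumes m: "1 \<le> m"
  shows "prob (round_failure m) \<le> 2 * \<delta> * pi^2 / 33 / (real m)^2"
proof -
  have "prob (round_failure m) \<le> (\<Sum>i<n. prob (\<Union>k<m. estimate_failure i m k))"
    unfolding round_failure_def using estimate_failure_in_events
    by (intro finite_measure_subadditive_finite) auto
  also have "\<dots> \<le> (\<Sum>i<n. \<Sum>k<m. prob (estimate_failure i m k))"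
    using estimate_failure_in_events by (intro sum_mono finite_measure_subadditive_finite) auto
  also have "\<dots> \<le> (\<Sum>i<n. \<Sum>k<m. 4 * \<delta> / (11 * real n * (real m)^2) * (1 / (real k + 1)^2))"
    using prob_estimate_failure m by (intro sum_mono) simp
  also have "\<dots> = real n * (4 * \<delta> / (11 * real n * (real m)^2) * (\<Sum>k<m. 1 / (real k + 1)^2))"
    by (simp add: sum_distrib_left)
  also have "\<dots> = 4 * \<delta> / (11 * (real m)^2) * (\<Sum>k<m. 1 / (real k + 1)^2)"
    using n by simp
  also have "\<dots> \<le> 4 * \<delta> / (11 * (real m)^2) * (pi^2 / 6)"
    using \<delta> by (intro mult_left_mono sum_inverse_squares_le) auto
  also have "\<dots> = 2 * \<delta> * pi^2 / 33 / (real m)^2" by simp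
  finally show ?thesis .
qed

lemma up_accurate_outside_round_failures:
  assumes "\<omega> \<in> space M" "\<And>m. 1 \<le> m \<Longrightarrow> \<omega> \<notin> round_failure m"
  shows "up_accurate n \<delta> u (\<lambda>i m j. T i m j \<omega>)
    (\<lambda>i. capped_util u (D i)) (\<lambda>i. completed_util u (D i))"
  unfolding up_accurate_def
proof (intro allI impI conjI)
  fix i m k :: nat assume "i < n" "1 \<le> m" "k < m"
  then have "\<omega> \<notin> estimate_failure i m k" using assms(2)[of m] by (auto simp: round_failure_def)
  then have capped: "\<bar>(\<Sum>j<m. u (min (T i m j \<omega>) (2^k))) / real m - capped_util u (D i) (2^k)\<bar>
      \<le> (1 - u (2^k)) * up_alpha n \<delta> m (2^k)"
    and completed: "\<bar>(\<Sum>j<m. if T i m j \<omega> < 2^k then u (T i m j \<omega>) else 0) / real m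
      - completed_util u (D i) (2^k)\<bar> < up_alpha n \<delta> m (2^k)"
    using assms(1) by (auto simp: estimate_failure_def)
  show "\<bar>up_Uhat u (\<lambda>i m j. T i m j \<omega>) i m (2^k) - capped_util u (D i) (2^k)\<bar>
      \<le> (1 - u (2^k)) * up_alpha n \<delta> m (2^k)"
    using capped by (simp add: up_Uhat_def)
  show "\<bar>up_Uhat u (\<lambda>i m j. T i m j \<omega>) i m (2^k)
      - u (2^k) * (1 - up_Fhat (\<lambda>i m j. T i m j \<omega>) i m (2^k))
      - completed_util u (D i) (2^k)\<bar> < up_alpha n \<delta> m (2^k)"
    using completed by (simp only: up_Uhat_minus_timeouts[OF \<open>1 \<le> m\<close>])
qed

theorem up_accurate_with_high_probability:
  "\<exists>E\<in>events. 1 - \<delta> \<le> prob E \<and> (\<forall>\<omega>\<in>E.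
     up_accurate n \<delta> u (\<lambda>i m j. T i m j \<omega>) (\<lambda>i. capped_util u (D i)) (\<lambda>i. completed_util u (D i)))"
proof -
  define F where "F = (\<Union>m. round_failure (Suc m))"
  have F_events: "F \<in> events"
    unfolding F_def using round_failure_in_events by (intro sets.countable_UN) auto
  have "prob (round_failure (Suc m)) \<le> 2 * \<delta> * pi^2 / 33 / (real m + 1)^2" for m
    using prob_round_failure[of "Suc m"] by (simp add: add.commute)
  then have "prob F \<le> 2 * \<delta> * pi^2 / 33 * pi^2 / 6"
    unfolding F_def by (rule measure_UN_le_inverse_squares[OF round_failure_in_events])
  also have "\<dots> = \<delta> * pi^4 / 99" by (simp add: eval_nat_numeral)
  also have "\<dots> \<le> \<delta>"
    \<comment> \<open>this is what the constant 11 in \<open>up_alpha\<close> is chosen for\<close>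
    using mult_left_mono[OF pi_fourth_power_le, of \<delta>] \<delta> by simp
  finally have "1 - \<delta> \<le> prob (space M - F)" using prob_compl[OF F_events] by simp
  moreover have "\<omega> \<notin> round_failure m" if "\<omega> \<in> space M - F" "1 \<le> m" for \<omega> m
    using that by (cases m) (auto simp: F_def)
  ultimately show ?thesis
    using up_accurate_outside_round_failures F_events by blast
qed

end

lemma mono_finite_range_eventually_const:
  fixes f :: "nat \<Rightarrow> 'a::linorder"
  assumes "mono f" "finite (range f)"
  shows "\<exists>N. \<forall>m\<ge>N. f m = f N"
proof -
  obtain N where N: "f N = Max (range f)" using Max_in[OF assms(2)] by auto
  have "f m = f N" if "N \<le> m" for m
    using monoD[OF assms(1) that] Max_ge[OF assms(2), of "f m"] N by simp
  then show ?thesis by blast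
qed

lemma finite_bounded_powers_of_two: "finite {x::real. (\<exists>k::nat. x = 2^k) \<and> x \<le> H}"
proof (rule finite_subset)
  show "{x::real. (\<exists>k::nat. x = 2^k) \<and> x \<le> H} \<subseteq> (\<lambda>k. 2^k) ` {..nat \<lceil>H\<rceil>}"
  proof clarify
    fix k :: nat assume "(2::real)^k \<le> H"
    moreover have "real k < 2^k" using of_nat_less_two_power[of k] by simp
    ultimately have "k \<le> nat \<lceil>H\<rceil>" by linarith
    then show "(2::real)^k \<in> (\<lambda>k. 2^k) ` {..nat \<lceil>H\<rceil>}" by auto
  qed
qed simp

locale up_accurate_run =
  fixes n :: nat and \<delta> :: real and u :: "real \<Rightarrow> real"
    and sel :: "nat \<Rightarrow> nat set \<Rightarrow> (nat \<Rightarrow> real) \<Rightarrow> nat"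
    and s :: "nat \<Rightarrow> nat \<Rightarrow> nat \<Rightarrow> real"
    and U :: "nat \<Rightarrow> real" and F \<mu>1 \<mu>2 :: "nat \<Rightarrow> real \<Rightarrow> real" and iopt :: nat
  assumes u_range: "\<And>t. 0 \<le> u t \<and> u t \<le> 1"
    and u_lim: "(u \<longlongrightarrow> 0) at_top"
    and n: "1 \<le> n" and \<delta>: "0 < \<delta>" "\<delta> \<le> 1"
    and iopt: "iopt < n" "\<And>i. i < n \<Longrightarrow> U i \<le> U iopt"
    and sel: "\<And>m I f. finite I \<Longrightarrow> I \<noteq> {} \<Longrightarrow> sel m I f \<in> I \<and> (\<forall>i\<in>I. f i \<le> f (sel m I f))"
    and F_range: "\<And>i \<kappa>. i < n \<Longrightarrow> 0 \<le> F i \<kappa> \<and> F i \<kappa> \<le> 1"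
    and sandwich: "\<And>i \<kappa>. i < n \<Longrightarrow> \<mu>2 i \<kappa> \<le> U i \<and> U i \<le> \<mu>1 i \<kappa>"
    and sandwich_gap: "\<And>i \<kappa>. i < n \<Longrightarrow> \<mu>1 i \<kappa> - \<mu>2 i \<kappa> = u \<kappa> * (1 - F i \<kappa>)"
    and accurate: "up_accurate n \<delta> u s \<mu>1 \<mu>2"
begin

text \<open>\<open>cand m\<close> and \<open>captime m\<close> describe the state after round \<open>m\<close>; round \<open>m\<close> itself runs with
  the captimes \<open>captime (m - 1)\<close>.\<close>
definition cand :: "nat \<Rightarrow> nat set" where
  "cand m = fst (up_state n \<delta> u sel s m)"

definition captime :: "nat \<Rightarrow> nat \<Rightarrow> real" where
  "captime m i = snd (up_state n \<delta> u sel s m) i"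

definition lcb :: "nat \<Rightarrow> nat \<Rightarrow> real" where
  "lcb m i = up_LCB n \<delta> u s i m (captime (m - 1) i)"

definition ucb :: "nat \<Rightarrow> nat \<Rightarrow> real" where
  "ucb m i = up_UCB n \<delta> u s i m (captime (m - 1) i)"

definition leader :: "nat \<Rightarrow> nat" where
  "leader m = sel m (cand (m - 1)) (lcb m)"

definition radius :: "nat \<Rightarrow> nat \<Rightarrow> real" where
  "radius m i = up_alpha n \<delta> m (captime (m - 1) i)"

definition timeout_mass :: "nat \<Rightarrow> nat \<Rightarrow> real" where
  "timeout_mass m i = u (captime (m - 1) i) * (1 - F i (captime (m - 1) i))"

lemma cand_0: "cand 0 = {..<n}"
  by (simp add: cand_def)

lemma cand_Suc: "cand (Suc m) = {i \<in> cand m. \<not> ucb (Suc m) i < lcb (Suc m) (leader (Suc m))}"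
  by (simp add: cand_def captime_def ucb_def lcb_def[abs_def] leader_def up_round_def up_istar_def
      Let_def)

lemma captime_0: "captime 0 i = 1"
  by (simp add: captime_def)

lemma captime_Suc:
  "captime (Suc m) i = (if i \<in> cand m \<and>
      2 * radius (Suc m) i \<le> u (captime m i) * (1 - up_Fhat s i (Suc m) (captime m i))
    then 2 * captime m i else captime m i)"
  by (simp add: cand_def captime_def radius_def up_round_def Let_def)

lemma captime_power_of_two: "\<exists>k\<le>m. captime m i = 2 ^ k"
proof (induction m)
  case 0
  then show ?case by (simp add: captime_0)
next
  case (Suc m)
  then obtain k where k: "k \<le> m" "captime m i = 2 ^ k" by auto
  show ?case
  proof (cases "captime (Suc m) i = captime m i")
    case True
    then show ?thesis using k by (intro exI[of _ k]) auto
  next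
    case False
    then have "captime (Suc m) i = 2 * captime m i" by (simp add: captime_Suc split: if_splits)
    then show ?thesis using k by (intro exI[of _ "Suc k"]) auto
  qed
qed

lemma captime_pos: "0 < captime m i"
  using captime_power_of_two[of m i] by auto

lemma mono_captime: "mono (\<lambda>m. captime m i)"
  unfolding mono_iff_le_Suc using captime_pos by (simp add: captime_Suc)

lemma cand_antimono: "m \<le> m' \<Longrightarrow> cand m' \<subseteq> cand m"
  by (induction rule: dec_induct) (auto simp: cand_Suc)

lemma cand_subset: "cand m \<subseteq> {..<n}"
  using cand_antimono[of 0 m] cand_0 by simp

lemma finite_cand: "finite (cand m)"
  using cand_subset finite_subset by blast

lemma radius_pos: "1 \<le> m \<Longrightarrow> 0 < radius m i"
  using captime_power_of_two[of "m - 1" i] up_alpha_pos[OF n _ \<delta>] by (auto simp: radius_def)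

lemma confidence_bounds:
  assumes i: "i < n" and m: "1 \<le> m"
  shows "lcb m i < U i" "U i - timeout_mass m i - 2 * radius m i < lcb m i"
    and "U i \<le> ucb m i" "ucb m i \<le> U i + timeout_mass m i + 2 * radius m i"
    and "timeout_mass m i
      \<le> u (captime (m - 1) i) * (1 - up_Fhat s i m (captime (m - 1) i)) + 2 * radius m i"
proof -
  define \<kappa> where "\<kappa> = captime (m - 1) i"
  obtain k where "k \<le> m - 1" "\<kappa> = 2 ^ k" using captime_power_of_two \<kappa>_def by blast
  then have est: "\<bar>up_Uhat u s i m \<kappa> - \<mu>1 i \<kappa>\<bar> \<le> (1 - u \<kappa>) * radius m i"
    "\<bar>up_Uhat u s i m \<kappa> - u \<kappa> * (1 - up_Fhat s i m \<kappa>) - \<mu>2 i \<kappa>\<bar> < radius m i"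
    using accurate i m by (auto simp: up_accurate_def \<kappa>_def radius_def)
  have "0 \<le> u \<kappa> * radius m i" using radius_pos[OF m, of i] u_range[of \<kappa>] by simp
  moreover have "lcb m i = up_Uhat u s i m \<kappa> - radius m i - u \<kappa> * (1 - up_Fhat s i m \<kappa>)"
    "ucb m i = up_Uhat u s i m \<kappa> + (1 - u \<kappa>) * radius m i"
    "timeout_mass m i = u \<kappa> * (1 - F i \<kappa>)"
    by (simp_all add: lcb_def ucb_def timeout_mass_def up_LCB_def up_UCB_def radius_def \<kappa>_def)
  moreover note est sandwich[OF i, of \<kappa>] sandwich_gap[OF i, of \<kappa>]
  ultimately show "lcb m i < U i" "U i - timeout_mass m i - 2 * radius m i < lcb m i"
    and "U i \<le> ucb m i" "ucb m i \<le> U i + timeout_mass m i + 2 * radius m i"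
    and "timeout_mass m i
      \<le> u (captime (m - 1) i) * (1 - up_Fhat s i m (captime (m - 1) i)) + 2 * radius m i"
    unfolding \<kappa>_def[symmetric] by (auto simp: algebra_simps abs_if split: if_splits)
qed

lemma leader_maximizes_lcb:
  assumes "cand (m - 1) \<noteq> {}"
  shows "leader m \<in> cand (m - 1)" "\<And>j. j \<in> cand (m - 1) \<Longrightarrow> lcb m j \<le> lcb m (leader m)"
  using sel[OF finite_cand assms, of m "lcb m"] by (auto simp: leader_def)

lemma iopt_in_cand: "iopt \<in> cand m"
proof (induction m)
  case 0
  then show ?case using iopt(1) by (simp add: cand_0)
next
  case (Suc m)
  then have "leader (Suc m) \<in> cand m" using leader_maximizes_lcb(1)[of "Suc m"] by auto
  then have "leader (Suc m) < n" using cand_subset by auto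
  then have "lcb (Suc m) (leader (Suc m)) < U (leader (Suc m))" by (intro confidence_bounds) auto
  also have "\<dots> \<le> U iopt" using iopt(2) \<open>leader (Suc m) < n\<close> .
  also have "\<dots> \<le> ucb (Suc m) iopt" using iopt(1) by (intro confidence_bounds) auto
  finally show ?case using Suc by (simp add: cand_Suc)
qed

lemma leader_in_cand: "leader m \<in> cand (m - 1)"
  and leader_less: "leader m < n"
  and lcb_le_leader: "j \<in> cand (m - 1) \<Longrightarrow> lcb m j \<le> lcb m (leader m)"
  using leader_maximizes_lcb[of m] iopt_in_cand[of "m - 1"] cand_subset by blast+

lemma leader_eps_optimal:
  assumes "1 \<le> m" "2 * radius m iopt + timeout_mass m iopt \<le> \<epsilon>"
  shows "U iopt - \<epsilon> \<le> U (leader m)"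
proof -
  have "U iopt - \<epsilon> < lcb m iopt"
    using confidence_bounds(2)[OF iopt(1) assms(1)] assms(2) by linarith
  also have "\<dots> \<le> lcb m (leader m)" using lcb_le_leader iopt_in_cand by blast
  also have "\<dots> < U (leader m)" using confidence_bounds(1)[OF leader_less assms(1)] .
  finally show ?thesis by simp
qed

lemma eliminated_if_width_small:
  assumes i: "i < n" and m: "1 \<le> m"
    and width: "2 * radius m i + 2 * radius m iopt + timeout_mass m i + timeout_mass m iopt
      \<le> U iopt - U i"
  shows "i \<notin> cand m"
proof -
  have "ucb m i \<le> U i + timeout_mass m i + 2 * radius m i" using confidence_bounds(4)[OF i m] .
  also have "\<dots> \<le> U iopt - timeout_mass m iopt - 2 * radius m iopt" using width by linarith
  also have "\<dots> < lcb m iopt" using confidence_bounds(2)[OF iopt(1) m] .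
  also have "\<dots> \<le> lcb m (leader m)" using lcb_le_leader iopt_in_cand by blast
  finally show ?thesis using m by (cases m) (simp_all add: cand_Suc)
qed

lemma leader_eq_iopt_if_single:
  assumes m: "1 \<le> m" and "card (cand m) = 1"
  shows "leader m = iopt"
proof -
  have "lcb m (leader m) < ucb m (leader m)"
    using confidence_bounds(1,3)[OF leader_less[of m] m] by linarith
  then have "leader m \<in> cand m" using m leader_in_cand[of m] by (cases m) (simp_all add: cand_Suc)
  then show ?thesis using iopt_in_cand[of m] assms(2) by (metis card_1_singletonE singletonD)
qed

lemma radius_eventually_small:
  assumes "0 < \<eta>"
  shows "eventually (\<lambda>m. radius m j < \<eta>) sequentially"
  using up_alpha_eventually_small[OF n \<delta> assms] eventually_ge_at_top[of 1]
proof eventually_elim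
  case (elim m)
  obtain k where "k \<le> m - 1" "captime (m - 1) j = 2 ^ k" using captime_power_of_two by blast
  then show ?case using elim by (simp add: radius_def)
qed

text \<open>If the captime of \<open>j\<close> stops doubling, the doubling test fails from then on, so the
  empirical timeout mass, and with it \<open>timeout_mass\<close>, is below a few radii.\<close>
lemma width_vanishes_if_captime_bounded:
  assumes j: "j < n" and always: "\<And>m. j \<in> cand m" and bounded: "\<And>m. captime m j \<le> H"
    and "0 < \<eta>"
  shows "eventually (\<lambda>m. 2 * radius m j + timeout_mass m j < \<eta>) sequentially"
proof -
  have "range (\<lambda>m. captime m j) \<subseteq> {x. (\<exists>k::nat. x = 2^k) \<and> x \<le> H}"
    using captime_power_of_two bounded by blast
  then obtain N where N: "\<And>m. N \<le> m \<Longrightarrow> captime m j = captime N j"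
    using mono_finite_range_eventually_const[OF mono_captime]
      finite_subset[OF _ finite_bounded_powers_of_two] by metis
  have "eventually (\<lambda>m. radius m j < \<eta> / 6) sequentially"
    using \<open>0 < \<eta>\<close> by (intro radius_eventually_small) simp
  then show ?thesis
    using eventually_ge_at_top[of "Suc N"]
  proof eventually_elim
    case (elim m)
    then obtain m' where m': "m = Suc m'" "N \<le> m'" by (cases m) auto
    then have "captime (Suc m') j = captime m' j" using N[of m'] N[of "Suc m'"] by simp
    then have "u (captime m' j) * (1 - up_Fhat s j m (captime m' j)) < 2 * radius m j"
      using captime_Suc[of m' j] always[of m'] captime_pos[of m' j] m'
      by (auto split: if_splits)
    then have "timeout_mass m j < 4 * radius m j"
      using confidence_bounds(5)[OF j, of m] m' by simp
    then show ?case using elim by linarith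
  qed
qed

lemma width_vanishes_if_captime_unbounded:
  assumes j: "j < n" and unbounded: "\<not> (\<exists>H. \<forall>m. captime m j \<le> H)" and "0 < \<eta>"
  shows "eventually (\<lambda>m. 2 * radius m j + timeout_mass m j < \<eta>) sequentially"
proof -
  obtain H where H: "\<And>x. H \<le> x \<Longrightarrow> u x < \<eta> / 2"
    using order_tendstoD(2)[OF u_lim, of "\<eta> / 2"] \<open>0 < \<eta>\<close> by (auto simp: eventually_at_top_linorder)
  obtain N where N: "H < captime N j" using unbounded by (auto simp: not_le)
  have "eventually (\<lambda>m. radius m j < \<eta> / 4) sequentially"
    using \<open>0 < \<eta>\<close> by (intro radius_eventually_small) simp
  then show ?thesis
    using eventually_ge_at_top[of "Suc N"]
  proof eventually_elim
    case (elim m)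
    have "captime N j \<le> captime (m - 1) j" using elim monoD[OF mono_captime] by simp
    then have "u (captime (m - 1) j) < \<eta> / 2" using N by (intro H) simp
    moreover have "timeout_mass m j \<le> u (captime (m - 1) j)"
      unfolding timeout_mass_def using F_range[OF j] u_range by (intro mult_left_le) auto
    ultimately show ?case using elim by linarith
  qed
qed

lemma width_vanishes:
  assumes "j < n" "\<And>m. j \<in> cand m" "0 < \<eta>"
  shows "eventually (\<lambda>m. 2 * radius m j + timeout_mass m j < \<eta>) sequentially"
  using width_vanishes_if_captime_bounded width_vanishes_if_captime_unbounded assms by blast

lemma suboptimal_eventually_eliminated:
  assumes i: "i < n" and subopt: "U i < U iopt"
  shows "eventually (\<lambda>m. i \<notin> cand m) sequentially"
proof -
  have "\<exists>M. i \<notin> cand M"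
  proof (rule ccontr)
    assume "\<nexists>M. i \<notin> cand M"
    then have always: "\<And>m. i \<in> cand m" by blast
    define \<Delta> where "\<Delta> = U iopt - U i"
    have "\<Delta> > 0" using subopt by (simp add: \<Delta>_def)
    have "eventually (\<lambda>m. 2 * radius m i + timeout_mass m i < \<Delta> / 2) sequentially"
      using \<open>\<Delta> > 0\<close> by (intro width_vanishes i always) simp
    moreover have "eventually (\<lambda>m. 2 * radius m iopt + timeout_mass m iopt < \<Delta> / 2) sequentially"
      using \<open>\<Delta> > 0\<close> by (intro width_vanishes iopt(1) iopt_in_cand) simp
    ultimately have "eventually (\<lambda>m. i \<notin> cand m) sequentially"
      using eventually_ge_at_top[of 1]
      by eventually_elim (use eliminated_if_width_small[OF i] in \<open>auto simp: \<Delta>_def\<close>)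
    then show False using always by (auto simp: eventually_sequentially)
  qed
  then obtain M where "i \<notin> cand M" ..
  then show ?thesis unfolding eventually_sequentially using cand_antimono by blast
qed

lemma up_return_eq_leader: "up_return n \<delta> u sel s m = leader m"
  by (simp add: up_return_def up_istar_def leader_def cand_def lcb_def[abs_def] captime_def)

lemma up_cap_eq_captime: "up_cap n \<delta> u sel s m i = captime (m - 1) i"
  by (simp add: up_cap_def captime_def)

lemma up_return_eventually_optimal: "\<exists>M. \<forall>m\<ge>M. U (up_return n \<delta> u sel s m) = U iopt"
proof -
  have "eventually (\<lambda>m. \<forall>i\<in>{i. i < n \<and> U i < U iopt}. i \<notin> cand m) sequentially"
    by (rule eventually_ball_finite) (auto intro: suboptimal_eventually_eliminated)
  then obtain M where M: "\<And>m i. M \<le> m \<Longrightarrow> i < n \<Longrightarrow> U i < U iopt \<Longrightarrow> i \<notin> cand m"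
    by (auto simp: eventually_sequentially)
  have "U (leader m) = U iopt" if "Suc M \<le> m" for m
    using M[of "m - 1" "leader m"] that leader_in_cand[of m] leader_less[of m]
      iopt(2)[of "leader m"]
    by force
  then show ?thesis by (auto simp: up_return_eq_leader)
qed

lemma up_return_eq_iopt_if_single:
  "1 \<le> m \<Longrightarrow> card (fst (up_state n \<delta> u sel s m)) = 1 \<Longrightarrow> up_return n \<delta> u sel s m = iopt"
  using leader_eq_iopt_if_single by (simp add: up_return_eq_leader cand_def)

lemma up_stops_with_iopt:
  assumes "\<And>i. i < n \<Longrightarrow> i \<noteq> iopt \<Longrightarrow> U i < U iopt"
  shows "\<exists>m. up_executed n \<delta> u sel s m \<and> fst (up_state n \<delta> u sel s m) = {iopt}"
proof -
  have "eventually (\<lambda>m. \<forall>i\<in>{i. i < n \<and> i \<noteq> iopt}. i \<notin> cand m) sequentially"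
    using assms by (intro eventually_ball_finite) (auto intro: suboptimal_eventually_eliminated)
  then obtain M where M: "\<And>m i. M \<le> m \<Longrightarrow> i < n \<Longrightarrow> i \<noteq> iopt \<Longrightarrow> i \<notin> cand m"
    by (auto simp: eventually_sequentially)
  have "cand (Suc M) = {iopt}"
  proof (intro equalityI subsetI)
    fix i assume "i \<in> cand (Suc M)"
    then show "i \<in> {iopt}" using M[of "Suc M" i] cand_subset by auto
  qed (use iopt_in_cand in auto)
  then have stop: "\<exists>m. 1 \<le> m \<and> card (cand m) = 1" by (intro exI[of _ "Suc M"]) simp
  define m0 where "m0 = (LEAST m. 1 \<le> m \<and> card (cand m) = 1)"
  have m0: "1 \<le> m0" "card (cand m0) = 1" using LeastI_ex[OF stop] by (simp_all add: m0_def)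
  have "up_executed n \<delta> u sel s m0"
    using m0 not_less_Least[where P="\<lambda>m. 1 \<le> m \<and> card (cand m) = 1"]
    by (auto simp: up_executed_def cand_def m0_def)
  moreover have "cand m0 = {iopt}"
    using m0(2) iopt_in_cand[of m0] by (metis card_1_singletonE singletonD)
  ultimately show ?thesis by (auto simp: cand_def)
qed

lemma up_return_eps_optimal:
  assumes "1 \<le> m"
    and "2 * up_alpha n \<delta> m (up_cap n \<delta> u sel s m iopt)
      + u (up_cap n \<delta> u sel s m iopt) * (1 - F iopt (up_cap n \<delta> u sel s m iopt)) \<le> \<epsilon>"
  shows "U iopt - \<epsilon> \<le> U (up_return n \<delta> u sel s m)"
  using leader_eps_optimal assms
  by (simp add: up_return_eq_leader up_cap_eq_captime radius_def timeout_mass_def)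

lemma up_eliminates_suboptimal:
  assumes "i < n" "1 \<le> m"
    and "2 * up_alpha n \<delta> m (up_cap n \<delta> u sel s m i)
      + 2 * up_alpha n \<delta> m (up_cap n \<delta> u sel s m iopt)
      + u (up_cap n \<delta> u sel s m i) * (1 - F i (up_cap n \<delta> u sel s m i))
      + u (up_cap n \<delta> u sel s m iopt) * (1 - F iopt (up_cap n \<delta> u sel s m iopt)) \<le> U iopt - U i"
  shows "i \<notin> fst (up_state n \<delta> u sel s m)"
  using eliminated_if_width_small assms
  by (simp add: up_cap_eq_captime radius_def timeout_mass_def cand_def)

end

lemma (in up_samples) up_accurate_run_if_accurate:
  assumes "(u \<longlongrightarrow> 0) at_top"
    and "iopt < n" "\<And>i. i < n \<Longrightarrow> exp_util u (D i) \<le> exp_util u (D iopt)"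
    and "\<And>m I f. finite I \<Longrightarrow> I \<noteq> {} \<Longrightarrow> sel m I f \<in> I \<and> (\<forall>i\<in>I. f i \<le> f (sel m I f))"
    and "up_accurate n \<delta> u s (\<lambda>i. capped_util u (D i)) (\<lambda>i. completed_util u (D i))"
  shows "up_accurate_run n \<delta> u sel s (\<lambda>i. exp_util u (D i)) (\<lambda>i. run_cdf (D i))
    (\<lambda>i. capped_util u (D i)) (\<lambda>i. completed_util u (D i)) iopt"
proof unfold_locales
  fix i \<kappa> assume "i < n"
  then have Di: "prob_space (D i)" "sets (D i) = sets borel" using D by auto
  show "0 \<le> run_cdf (D i) \<kappa> \<and> run_cdf (D i) \<kappa> \<le> 1" by (rule run_cdf_bounds[OF Di(1)])
  show "completed_util u (D i) \<kappa> \<le> exp_util u (D i) \<and> exp_util u (D i) \<le> capped_util u (D i) \<kappa>"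
    using completed_util_le_exp_util[OF Di u_range u_antimono]
      exp_util_le_capped_util[OF Di u_range u_antimono] by simp
  show "capped_util u (D i) \<kappa> - completed_util u (D i) \<kappa> = u \<kappa> * (1 - run_cdf (D i) \<kappa>)"
    by (rule capped_util_minus_completed_util[OF Di u_range u_antimono])
qed (use assms u_range n \<delta> in auto)

theorem theorem4:
  fixes M :: "'w measure" and D :: "nat \<Rightarrow> real measure" and u :: "real \<Rightarrow> real"
    and n :: nat and \<delta> :: real and iopt :: nat
    and T :: "nat \<Rightarrow> nat \<Rightarrow> nat \<Rightarrow> 'w \<Rightarrow> real"
    and sel :: "nat \<Rightarrow> nat set \<Rightarrow> (nat \<Rightarrow> real) \<Rightarrow> nat"
  assumes M: "prob_space M"
    and u_range: "\<forall>t. 0 \<le> u t \<and> u t \<le> 1"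
    and u_antimono: "\<forall>s t. s \<le> t \<longrightarrow> u t \<le> u s"
    and u0: "u 0 = 1"
    and u_lim: "(u \<longlongrightarrow> 0) at_top"
    and n: "1 \<le> n"
    and D: "\<forall>i<n. prob_space (D i) \<and> sets (D i) = sets borel \<and> (AE t in D i. 0 \<le> t)"
    and T_meas: "\<forall>i<n. \<forall>m j. T i m j \<in> borel_measurable M"
    and T_distr: "\<forall>i<n. \<forall>m j. j < m \<longrightarrow> distr M borel (T i m j) = D i"
    and T_indep: "\<forall>i<n. \<forall>m. prob_space.indep_vars M (\<lambda>_. borel) (\<lambda>j. T i m j) {..<m}"
    and iopt: "iopt < n" "\<forall>i<n. exp_util u (D i) \<le> exp_util u (D iopt)"
    and sel: "\<forall>m I f. finite I \<and> I \<noteq> {} \<longrightarrow> sel m I f \<in> I \<and> (\<forall>i\<in>I. f i \<le> f (sel m I f))"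
    and \<delta>: "0 < \<delta>" "\<delta> < 1"
  shows "\<exists>E \<in> sets M. measure M E \<ge> 1 - \<delta> \<and> (\<forall>\<omega>\<in>E.
    let s = (\<lambda>i m j. T i m j \<omega>);
        U = (\<lambda>i. exp_util u (D i));
        F = (\<lambda>i. run_cdf (D i));
        ex = up_executed n \<delta> u sel s;
        I = (\<lambda>m. fst (up_state n \<delta> u sel s m));
        cap = up_cap n \<delta> u sel s;
        ret = up_return n \<delta> u sel s;
        \<alpha> = up_alpha n \<delta>
    in
    \<comment> \<open>(1) UP eventually returns an optimal algorithm\<close>
    ((\<exists>M0. \<forall>m\<ge>M0. ex m \<longrightarrow> U (ret m) = U iopt)
     \<and> (\<forall>m. ex m \<and> card (I m) = 1 \<longrightarrow> U (ret m) = U iopt)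
     \<and> ((\<forall>i<n. i \<noteq> iopt \<longrightarrow> U i < U iopt) \<longrightarrow> (\<exists>m. ex m \<and> I m = {iopt})))
    \<comment> \<open>(2) epsilon-optimality of the algorithm returned at the end of round m\<close>
    \<and> (\<forall>\<epsilon>::real. \<forall>m. ex m \<longrightarrow>
         2 * \<alpha> m (cap m iopt) + u (cap m iopt) * (1 - F iopt (cap m iopt)) \<le> \<epsilon> \<longrightarrow>
         U (ret m) \<ge> U iopt - \<epsilon>)
    \<comment> \<open>(3) elimination of suboptimal algorithms\<close>
    \<and> (\<forall>i<n. U i < U iopt \<longrightarrow> (\<forall>m. ex m \<longrightarrow>
         2 * \<alpha> m (cap m i) + 2 * \<alpha> m (cap m iopt)
           + u (cap m i) * (1 - F i (cap m i)) + u (cap m iopt) * (1 - F iopt (cap m iopt))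
           \<le> U iopt - U i \<longrightarrow> i \<notin> I m)))"
proof -
  have "antimono u" using u_antimono by (auto intro: antimonoI)
  interpret up_samples M n \<delta> u D T
    by (intro up_samples.intro[OF M] up_samples_axioms.intro)
      (use n \<delta> u_range \<open>antimono u\<close> D T_meas T_distr T_indep in simp_all)
  obtain E where E: "E \<in> sets M" "1 - \<delta> \<le> measure M E" and accurate:
    "\<And>\<omega>. \<omega> \<in> E \<Longrightarrow>
      up_accurate n \<delta> u (\<lambda>i m j. T i m j \<omega>) (\<lambda>i. capped_util u (D i)) (\<lambda>i. completed_util u (D i))"
    using up_accurate_with_high_probability by blast
  have run: "up_accurate_run n \<delta> u sel (\<lambda>i m j. T i m j \<omega>) (\<lambda>i. exp_util u (D i))
      (\<lambda>i. run_cdf (D i)) (\<lambda>i. capped_util u (D i)) (\<lambda>i. completed_util u (D i)) iopt"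
    if "\<omega> \<in> E" for \<omega>
    using iopt sel by (intro up_accurate_run_if_accurate u_lim accurate[OF that]) auto
  have executed: "1 \<le> m" if "up_executed n \<delta> u sel s m" for s m
    using that by (simp add: up_executed_def)
  note guarantees = up_accurate_run.up_return_eventually_optimal[OF run]
    up_accurate_run.up_return_eq_iopt_if_single[OF run] up_accurate_run.up_stops_with_iopt[OF run]
    up_accurate_run.up_return_eps_optimal[OF run] up_accurate_run.up_eliminates_suboptimal[OF run]
  show ?thesis
    unfolding Let_def
    by (intro bexI[of _ E] conjI ballI allI impI) (use E executed guarantees in metis)+
qed

end
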